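(* Let $f:\mathbb{R}^n\to\mathbb{R}$ be bounded below and continuously differentiable with $\nabla f$ Lipschitz with constant $L_{\nabla f}$. Let $x\in\mathbb{R}^n$, $\Delta>0$, points $y_1,\ldots,y_p$ with $\|y_i-x\|\le\beta\Delta$ for some $\beta>0$ and all $i$, with $\hat F$ invertible, and let $m$ be the minimum Frobenius norm quadratic interpolation model of $f$ and $\ell_1,\ldots,\ell_p$ the associated minimum Frobenius norm Lagrange polynomials (see context). Suppose $\max_{y\in B(x,\Delta)}\max_{i}|\ell_i(y)|\le\Lambda_\infty$. Then the Hessian $H$ of $m$ satisfies $\|H\|\le\kappa_H:=12L_{\nabla f}p\beta^2\Lambda_\infty$.
   Context: Here $n+2\le p\le(n+1)(n+2)/2-1$. Let $\hat s_i=(y_i-x)/\Delta$, $\hat M$ with rows $[1,\hat s_i^T]$, $\hat P_{ij}=\tfrac12(\hat s_i^T\hat s_j)^2$, $\hat F=\begin{bmatrix}\hat P&\hat M\\ \hat M^T&0\end{bmatrix}$. For data values $v_1,\ldots,v_p$, the minimum Frobenius norm interpolant is the quadratic $q(y)=c+g^T(y-x)+\tfrac12(y-x)^TH(y-x)$ with $H$ symmetric minimizing $\tfrac14\|H\|_F^2$ subject to $q(y_i)=v_i$ for all $i$; when $\hat F$ is invertible it is unique and obtained by solving $\hat F[\hat\lambda;c;\Delta g]=[v;0;0_n]$ and setting $H=\sum_i(\hat\lambda_i/\Delta^4)(y_i-x)(y_i-x)^T$. The model $m$ uses $v_i=f(y_i)$; the Lagrange polynomial $\ell_i$ uses $v_j=\delta_{ij}$.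 $\|H\|$ is the operator 2-norm; $B(x,\Delta)=\{y:\|y-x\|\le\Delta\}$. *)

theory Defs
  imports "HOL-Analysis.Analysis"
begin

text \<open>Points are vectors in real^'n (n = CARD('n)); the interpolation points are
indexed by a finite type 'p (p = CARD('p)).  The quadratic with centre x,
constant c, gradient g and symmetric Hessian H.\<close>

definition qeval :: "real^'n \<Rightarrow> real \<Rightarrow> real^'n \<Rightarrow> real^'n^'n \<Rightarrow> real^'n \<Rightarrow> real" where
  "qeval x c g H y = c + g \<bullet> (y - x) + (1/2) * ((y - x) \<bullet> (H *v (y - x)))"

definition shat :: "real^'n \<Rightarrow> real \<Rightarrow> ('p \<Rightarrow> real^'n) \<Rightarrow> 'p \<Rightarrow> real^'n" where
  "shat x \<Delta> y i = (1 / \<Delta>) *\<^sub>R (y i - x)"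

text \<open>The matrix F = [[P, M],[M^T, 0]] of size (p+1+n), rows/columns indexed by
'p + (unit + 'n): Inl i ~ row i of P / M, Inr (Inl ()) ~ the constant column,
Inr (Inr k) ~ the k-th coordinate column.\<close>
definition Fhat :: "real^'n \<Rightarrow> real \<Rightarrow> ('p::finite \<Rightarrow> real^'n) \<Rightarrow> real^('p + (unit + 'n))^('p + (unit + 'n))" where
  "Fhat x \<Delta> y = (\<chi> a b. (case (a, b) of
       (Inl i, Inl j) \<Rightarrow> (1/2) * (shat x \<Delta> y i \<bullet> shat x \<Delta> y j)^2
     | (Inl i, Inr (Inl _)) \<Rightarrow> 1
     | (Inl i, Inr (Inr k)) \<Rightarrow> shat x \<Delta> y i $ k
     | (Inr (Inl _), Inl j) \<Rightarrow> 1
     | (Inr (Inr k), Inl j) \<Rightarrow> shat x \<Delta> y j $ k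
     | (Inr _, Inr _) \<Rightarrow> 0))"

text \<open>Note that norm on real^'n^'n is the Frobenius norm.\<close>
definition mfn_interp :: "real^'n \<Rightarrow> ('p \<Rightarrow> real^'n) \<Rightarrow> ('p \<Rightarrow> real)
     \<Rightarrow> real \<Rightarrow> real^'n \<Rightarrow> real^'n^'n \<Rightarrow> bool" where
  "mfn_interp x y v c g H \<longleftrightarrow>
     transpose H = H \<and> (\<forall>i. qeval x c g H (y i) = v i) \<and>
     (\<forall>c' g' H'. transpose H' = H' \<and> (\<forall>i. qeval x c' g' H' (y i) = v i)
        \<longrightarrow> (1/4) * (norm H)^2 \<le> (1/4) * (norm H')^2)"

end

theory Submission
  imports Defs
begin

text \<open>Minimality of the Frobenius norm makes the Hessian of an interpolant orthogonal to the
Hessian of every symmetric quadratic vanishing at the sample points.  Hence the Hessian of the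
model is the Lagrange combination \<open>H = \<Sum>\<^sub>i v\<^sub>i H\<^sub>i\<close>, and since the combination annihilates data
coming from affine functions, \<open>v\<^sub>i\<close> may be replaced by the first-order Taylor remainders
\<open>f(y\<^sub>i) - f(x) - \<nabla>f(x)\<^sup>T(y\<^sub>i - x)\<close>, which are at most \<open>L \<beta>\<^sup>2 \<Delta>\<^sup>2\<close>.  A quadratic bounded by \<open>\<Lambda>\<close> on
\<open>B(x,\<Delta>)\<close> has second central differences at most \<open>4\<Lambda>\<close>, so \<open>|s\<^sup>T H\<^sub>i s| \<le> 4\<Lambda>/\<Delta>\<^sup>2 \<parallel>s\<parallel>\<^sup>2\<close>, and for a
symmetric matrix the quadratic form controls the operator norm.  Altogether
\<open>\<parallel>H\<parallel> \<le> 4 L p \<beta>\<^sup>2 \<Lambda> \<le> \<kappa>\<^sub>H\<close>.\<close>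

lemma linear_transpose: "linear (transpose :: real^'n^'m \<Rightarrow> real^'m^'n)"
  by (rule linearI) (simp_all add: transpose_def vec_eq_iff)

lemma linear_matrix_vector_mult_left: "linear (\<lambda>A :: real^'n^'m. A *v v)"
  by (rule linearI) (simp_all add: matrix_vector_mult_add_rdistrib scaleR_matrix_vector_assoc)

lemma qeval_add: "qeval x (c1 + c2) (g1 + g2) (H1 + H2) z = qeval x c1 g1 H1 z + qeval x c2 g2 H2 z"
  by (simp add: qeval_def algebra_simps)

lemma qeval_diff: "qeval x (c1 - c2) (g1 - g2) (H1 - H2) z = qeval x c1 g1 H1 z - qeval x c2 g2 H2 z"
  by (simp add: qeval_def algebra_simps)

lemma qeval_scaleR: "qeval x (t * c) (t *\<^sub>R g) (t *\<^sub>R H) z = t * qeval x c g H z"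
  by (simp add: qeval_def scaleR_matrix_vector_assoc[symmetric] algebra_simps)

lemma qeval_sum:
  assumes "finite S"
  shows "qeval x (\<Sum>i\<in>S. a i * c i) (\<Sum>i\<in>S. a i *\<^sub>R g i) (\<Sum>i\<in>S. a i *\<^sub>R H i) z
           = (\<Sum>i\<in>S. a i * qeval x (c i) (g i) (H i) z)"
  using assms by (induction S rule: finite_induct) (simp add: qeval_def, simp add: qeval_add qeval_scaleR)

lemma mfn_interp_hessian_orthogonal:
  assumes interp: "mfn_interp x y v c g H" and sym_K: "transpose K = K"
    and vanish: "\<And>i. qeval x c0 g0 K (y i) = 0"
  shows "H \<bullet> K = 0"
proof (cases "K = 0")
  case False
  define a where "a = H \<bullet> K"
  define b where "b = K \<bullet> K"
  have b_pos: "b > 0" using False by (simp add: b_def)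
  define t where "t = - a / b"
  have "transpose (H + t *\<^sub>R K) = H + t *\<^sub>R K"
    using interp sym_K by (simp add: mfn_interp_def linear_add[OF linear_transpose] transpose_scalar)
  moreover have "qeval x (c + t * c0) (g + t *\<^sub>R g0) (H + t *\<^sub>R K) (y i) = v i" for i
    using interp vanish by (simp add: mfn_interp_def qeval_add qeval_scaleR)
  ultimately have "(norm H)\<^sup>2 \<le> (norm (H + t *\<^sub>R K))\<^sup>2"
    using interp unfolding mfn_interp_def by fastforce
  also have "\<dots> = (norm H)\<^sup>2 + 2 * t * a + t\<^sup>2 * b"
    unfolding power2_norm_eq_inner
    by (simp add: inner_commute a_def b_def power2_eq_square algebra_simps)
  also have "\<dots> = (norm H)\<^sup>2 - a\<^sup>2 / b"
    using b_pos by (simp add: t_def field_simps power2_eq_square)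
  finally have "a\<^sup>2 / b \<le> 0" by simp
  then show ?thesis using b_pos by (simp add: a_def divide_le_0_iff)
qed simp

lemma mfn_interp_hessian_eq_sum_lagrange:
  fixes y :: "'p::finite \<Rightarrow> real^'n"
  assumes interp: "mfn_interp x y v c g H"
    and lagrange: "\<And>i. mfn_interp x y (\<lambda>j. if j = i then 1 else 0) (cl i) (gl i) (Hl i)"
  shows "H = (\<Sum>i\<in>UNIV. v i *\<^sub>R Hl i)"
proof -
  define S where "S = (\<Sum>i\<in>UNIV. v i *\<^sub>R Hl i)"
  define D where "D = H - S"
  have sym_Hl: "transpose (Hl i) = Hl i" for i
    using lagrange[of i] by (simp add: mfn_interp_def)
  have interp_S: "qeval x (\<Sum>i\<in>UNIV. v i * cl i) (\<Sum>i\<in>UNIV. v i *\<^sub>R gl i) S (y j) = v j" for j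
  proof -
    have "qeval x (\<Sum>i\<in>UNIV. v i * cl i) (\<Sum>i\<in>UNIV. v i *\<^sub>R gl i) S (y j)
            = (\<Sum>i\<in>UNIV. v i * qeval x (cl i) (gl i) (Hl i) (y j))"
      unfolding S_def by (rule qeval_sum) simp
    also have "\<dots> = (\<Sum>i\<in>UNIV. if i = j then v j else 0)"
      using lagrange by (intro sum.cong) (auto simp: mfn_interp_def)
    finally show ?thesis by simp
  qed
  have sym_D: "transpose D = D"
    using interp sym_Hl
    by (simp add: D_def S_def mfn_interp_def linear_diff[OF linear_transpose]
        linear_sum[OF linear_transpose] transpose_scalar)
  have vanish_D: "qeval x (c - (\<Sum>i\<in>UNIV. v i * cl i)) (g - (\<Sum>i\<in>UNIV. v i *\<^sub>R gl i)) D (y j) = 0"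
    for j
    using interp interp_S by (simp add: D_def qeval_diff mfn_interp_def)
  have "H \<bullet> D = 0"
    by (rule mfn_interp_hessian_orthogonal[OF interp sym_D vanish_D])
  moreover have "S \<bullet> D = 0"
    unfolding S_def by (simp add: inner_sum_left mfn_interp_hessian_orthogonal[OF lagrange sym_D vanish_D])
  ultimately have "D \<bullet> D = 0" by (simp add: D_def inner_diff_left)
  then show ?thesis by (simp add: D_def S_def)
qed

lemma mfn_interp_affine: "mfn_interp x y (\<lambda>i. qeval x a b 0 (y i)) a b 0"
  by (simp add: mfn_interp_def transpose_def vec_eq_iff)

lemma mfn_interp_hessian_eq_sum_lagrange_remainder:
  fixes y :: "'p::finite \<Rightarrow> real^'n"
  assumes interp: "mfn_interp x y v c g H"
    and lagrange: "\<And>i. mfn_interp x y (\<lambda>j. if j = i then 1 else 0) (cl i) (gl i) (Hl i)"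
  shows "H = (\<Sum>i\<in>UNIV. (v i - (a + b \<bullet> (y i - x))) *\<^sub>R Hl i)"
proof -
  have "(\<Sum>i\<in>UNIV. qeval x a b 0 (y i) *\<^sub>R Hl i) = 0"
    using mfn_interp_hessian_eq_sum_lagrange[OF mfn_interp_affine lagrange] by simp
  then show ?thesis
    using mfn_interp_hessian_eq_sum_lagrange[OF interp lagrange]
    by (simp add: qeval_def scaleR_left_diff_distrib sum_subtractf)
qed

lemma abs_quadratic_form_le_of_qeval_bounded:
  fixes A :: "real^'n^'n"
  assumes \<Delta>_pos: "\<Delta> > 0" and bounded: "\<And>z. z \<in> cball x \<Delta> \<Longrightarrow> \<bar>qeval x c g A z\<bar> \<le> \<Lambda>"
  shows "\<bar>v \<bullet> (A *v v)\<bar> \<le> 4 * \<Lambda> / \<Delta>\<^sup>2 * (norm v)\<^sup>2"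
proof (cases "v = 0")
  case False
  define s where "s = (\<Delta> / norm v) *\<^sub>R v"
  have "norm s = \<Delta>" using False \<Delta>_pos by (simp add: s_def)
  then have "\<bar>qeval x c g A (x + s)\<bar> \<le> \<Lambda>" "\<bar>qeval x c g A (x - s)\<bar> \<le> \<Lambda>" "\<bar>qeval x c g A x\<bar> \<le> \<Lambda>"
    using bounded \<Delta>_pos by (auto simp: dist_norm)
  moreover have "qeval x c g A (x + s) + qeval x c g A (x - s) - 2 * qeval x c g A x = s \<bullet> (A *v s)"
    by (simp add: qeval_def linear_neg[OF matrix_vector_mul_linear])
  ultimately have "\<bar>s \<bullet> (A *v s)\<bar> \<le> 4 * \<Lambda>" by linarith
  moreover have "s \<bullet> (A *v s) = (\<Delta> / norm v)\<^sup>2 * (v \<bullet> (A *v v))"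
    by (simp add: s_def power2_eq_square matrix_vector_mult_scaleR)
  ultimately have "(\<Delta> / norm v)\<^sup>2 * \<bar>v \<bullet> (A *v v)\<bar> \<le> 4 * \<Lambda>"
    by (simp add: abs_mult)
  then show ?thesis using False \<Delta>_pos by (simp add: field_simps power2_eq_square)
qed simp

lemma symmetric_matrix_polarization:
  fixes A :: "real^'n^'n"
  assumes "transpose A = A"
  shows "4 * (w \<bullet> (A *v u)) = (u + w) \<bullet> (A *v (u + w)) - (u - w) \<bullet> (A *v (u - w))"
proof -
  have "u \<bullet> (A *v w) = w \<bullet> (A *v u)"
    by (metis assms dot_lmul_matrix inner_commute transpose_matrix_vector)
  then show ?thesis
    by (simp add: matrix_vector_right_distrib matrix_vector_mult_diff_distrib
        inner_add_left inner_add_right inner_diff_left inner_diff_right)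
qed

lemma norm_matrix_vector_le_of_quadratic_form:
  fixes A :: "real^'n^'n"
  assumes sym: "transpose A = A" and form: "\<And>v. \<bar>v \<bullet> (A *v v)\<bar> \<le> M * (norm v)\<^sup>2"
  shows "norm (A *v u) \<le> M * norm u"
proof (cases "A *v u = 0")
  case True
  have "0 \<le> M * (norm u)\<^sup>2" using form[of u] by linarith
  then show ?thesis using True by (cases "u = 0") (simp_all add: zero_le_mult_iff)
next
  case False
  define w where "w = (norm u / norm (A *v u)) *\<^sub>R (A *v u)"
  have norm_w: "norm w = norm u" using False by (simp add: w_def)
  have "4 * (norm u * norm (A *v u)) = 4 * (w \<bullet> (A *v u))"
    using False by (simp add: w_def power2_norm_eq_inner[symmetric] power2_eq_square)
  also have "\<dots> \<le> M * (norm (u + w))\<^sup>2 + M * (norm (u - w))\<^sup>2"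
    using symmetric_matrix_polarization[OF sym, of w u] form[of "u + w"] form[of "u - w"] by linarith
  also have "\<dots> = M * (2 * (norm u)\<^sup>2 + 2 * (norm w)\<^sup>2)"
    unfolding power2_norm_eq_inner
    by (simp add: inner_commute algebra_simps)
  also have "\<dots> = 4 * (norm u * (M * norm u))"
    using norm_w by (simp add: power2_eq_square)
  finally have "norm u * norm (A *v u) \<le> norm u * (M * norm u)" by simp
  moreover have "norm u > 0" using False by auto
  ultimately show ?thesis by (simp add: mult_le_cancel_left_pos)
qed

lemma first_order_remainder_le_lipschitz_gradient:
  fixes f :: "'a::real_inner \<Rightarrow> real"
  assumes grad: "\<And>z. (f has_derivative (\<lambda>h. gf z \<bullet> h)) (at z)"
    and lip: "L-lipschitz_on UNIV gf"
  shows "\<bar>f y - f x - gf x \<bullet> (y - x)\<bar> \<le> L * (norm (y - x))\<^sup>2"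
proof -
  have L_nonneg: "0 \<le> L" using lip by (rule lipschitz_on_nonneg)
  define r where "r = norm (y - x)"
  define G where "G z = f z - gf x \<bullet> z" for z
  have "(G has_derivative (\<lambda>h. (gf z - gf x) \<bullet> h)) (at z within cball x r)" for z
  proof -
    have "((\<lambda>z. gf x \<bullet> z) has_derivative (\<lambda>h. gf x \<bullet> h)) (at z)"
      by (rule bounded_linear_imp_has_derivative[OF bounded_linear_inner_right])
    then have "(G has_derivative (\<lambda>h. gf z \<bullet> h - gf x \<bullet> h)) (at z)"
      unfolding G_def by (rule has_derivative_diff[OF grad])
    then show ?thesis by (simp add: inner_diff_left has_derivative_at_withinI)
  qed
  moreover have "onorm (\<lambda>h. (gf z - gf x) \<bullet> h) \<le> L * r" if "z \<in> cball x r" for z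
  proof (rule onorm_bound)
    show "0 \<le> L * r" using L_nonneg by (simp add: r_def)
  next
    fix h
    have "norm (gf z - gf x) \<le> L * dist z x"
      using lipschitz_onD[OF lip, of z x] by (simp add: dist_norm)
    also have "\<dots> \<le> L * r"
      using that L_nonneg by (intro mult_left_mono) (auto simp: dist_commute)
    finally have "\<bar>(gf z - gf x) \<bullet> h\<bar> \<le> L * r * norm h"
      using Cauchy_Schwarz_ineq2[of "gf z - gf x" h] by (meson mult_right_mono norm_ge_zero order_trans)
    then show "norm ((gf z - gf x) \<bullet> h) \<le> L * r * norm h" by simp
  qed
  ultimately have "norm (G y - G x) \<le> L * r * norm (y - x)"
    by (intro differentiable_bound[OF convex_cball]) (auto simp: r_def dist_norm norm_minus_commute)
  then show ?thesis
    by (simp add: G_def r_def power2_eq_square algebra_simps)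
qed

lemma onorm_matrix_sum_le:
  fixes A :: "'i \<Rightarrow> real^'n^'m"
  assumes "finite S" and coeff: "\<And>i. i \<in> S \<Longrightarrow> \<bar>w i\<bar> \<le> W"
    and matrix: "\<And>i v. i \<in> S \<Longrightarrow> norm (A i *v v) \<le> M * norm v"
  shows "onorm (\<lambda>v. (\<Sum>i\<in>S. w i *\<^sub>R A i) *v v) \<le> real (card S) * W * M"
proof (rule onorm_le)
  fix v
  have "norm ((\<Sum>i\<in>S. w i *\<^sub>R A i) *v v) = norm (\<Sum>i\<in>S. w i *\<^sub>R (A i *v v))"
    by (simp add: linear_sum[OF linear_matrix_vector_mult_left] scaleR_matrix_vector_assoc)
  also have "\<dots> \<le> (\<Sum>i\<in>S. \<bar>w i\<bar> * norm (A i *v v))"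
    by (rule norm_sum[THEN order_trans]) simp
  also have "\<dots> \<le> (\<Sum>i\<in>S. W * (M * norm v))"
    using coeff matrix by (intro sum_mono mult_mono) (auto intro: order_trans[OF abs_ge_zero])
  finally show "norm ((\<Sum>i\<in>S. w i *\<^sub>R A i) *v v) \<le> real (card S) * W * M * norm v"
    by (simp add: mult.assoc)
qed

theorem lemma6p7:
  fixes f :: "real^'n \<Rightarrow> real" and gf :: "real^'n \<Rightarrow> real^'n"
    and L :: real and x :: "real^'n" and \<Delta> \<beta> \<Lambda> :: real
    and y :: "'p::finite \<Rightarrow> real^'n"
    and c :: real and g :: "real^'n" and H :: "real^'n^'n"
    and cl :: "'p \<Rightarrow> real" and gl :: "'p \<Rightarrow> real^'n" and Hl :: "'p \<Rightarrow> real^'n^'n"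
  assumes p_lower: "CARD('n) + 2 \<le> CARD('p)"
    and p_upper: "CARD('p) \<le> (CARD('n) + 1) * (CARD('n) + 2) div 2 - 1"
    and bdd: "bdd_below (range f)"
    and grad: "\<And>z. (f has_derivative (\<lambda>h. gf z \<bullet> h)) (at z)"
    and grad_cont: "continuous_on UNIV gf"
    and lip: "L-lipschitz_on UNIV gf"
    and Delta_pos: "\<Delta> > 0" and beta_pos: "\<beta> > 0"
    and pts: "\<And>i. norm (y i - x) \<le> \<beta> * \<Delta>"
    and F_inv: "invertible (Fhat x \<Delta> y)"
    and model: "mfn_interp x y (\<lambda>i. f (y i)) c g H"
    and lagr: "\<And>i. mfn_interp x y (\<lambda>j. if j = i then 1 else 0) (cl i) (gl i) (Hl i)"
    and poised: "\<And>z i. z \<in> cball x \<Delta> \<Longrightarrow> \<bar>qeval x (cl i) (gl i) (Hl i) z\<bar> \<le> \<Lambda>"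
  shows "onorm (\<lambda>v. H *v v) \<le> 12 * L * real CARD('p) * \<beta>^2 * \<Lambda>"
proof -
  have L_nonneg: "0 \<le> L" using lip by (rule lipschitz_on_nonneg)
  have \<Lambda>_nonneg: "0 \<le> \<Lambda>"
    using poised[of x] Delta_pos by (meson abs_ge_zero centre_in_cball less_imp_le order_trans)
  have remainder: "\<bar>f (y i) - (f x + gf x \<bullet> (y i - x))\<bar> \<le> L * (\<beta> * \<Delta>)\<^sup>2" for i
  proof -
    have "\<bar>f (y i) - (f x + gf x \<bullet> (y i - x))\<bar> \<le> L * (norm (y i - x))\<^sup>2"
      using first_order_remainder_le_lipschitz_gradient[OF grad lip] by (simp add: diff_diff_eq)
    also have "\<dots> \<le> L * (\<beta> * \<Delta>)\<^sup>2"
      using pts[of i] L_nonneg by (intro mult_left_mono power_mono) auto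
    finally show ?thesis .
  qed
  have lagrange_hessian: "norm (Hl i *v v) \<le> 4 * \<Lambda> / \<Delta>\<^sup>2 * norm v" for i v
    using lagr[of i] poised
    by (intro norm_matrix_vector_le_of_quadratic_form abs_quadratic_form_le_of_qeval_bounded[OF Delta_pos])
      (auto simp: mfn_interp_def)
  have "onorm (\<lambda>v. H *v v) \<le> real CARD('p) * (L * (\<beta> * \<Delta>)\<^sup>2) * (4 * \<Lambda> / \<Delta>\<^sup>2)"
    unfolding mfn_interp_hessian_eq_sum_lagrange_remainder[OF model lagr, of "f x" "gf x"]
    using remainder lagrange_hessian by (intro onorm_matrix_sum_le) auto
  also have "\<dots> = 4 * L * real CARD('p) * \<beta>\<^sup>2 * \<Lambda>"
    using Delta_pos by (simp add: field_simps power2_eq_square)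
  also have "\<dots> \<le> 12 * L * real CARD('p) * \<beta>^2 * \<Lambda>"
    using L_nonneg \<Lambda>_nonneg by (intro mult_right_mono) auto
  finally show ?thesis .
qed

end
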